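(* There is an absolute constant $c>0$ such that the following holds. Let $0<\alpha<1$, $\zeta>0$, and let $p(z)$ be a monic polynomial of degree $n$ with distinct roots $\lambda_1,\dots,\lambda_n$, all of modulus less than $\alpha$, and let $\Gamma=\Gamma(p)$. Then there exist an integer $d$ with $0\le d\le c\left(1+\max\left\{\frac{1}{1-\alpha}\log\frac{\Gamma}{(1-\alpha)\zeta},0\right\}\right)$ and a polynomial $h(z)$ of degree $d$ with leading coefficient $1$ such that for all $z\in\mathbb{C}$ with $|z|=1$, $$\left|\frac{z^{n+d}}{p(z)}-h(z)\right|\le\zeta.$$
   Context: For a polynomial $h$ of degree $n$ with distinct roots $\lambda_1,\dots,\lambda_n$ inside the unit circle, $\Gamma(h)=\sum_{j=1}^n\left|\frac{\lambda_j^n}{\prod_{i\ne j}(\lambda_i-\lambda_j)}\right|$. *)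

theory Defs
  imports "HOL-Analysis.Analysis" "HOL-Computational_Algebra.Polynomial"
begin

definition Gamma :: "complex poly \<Rightarrow> real" where
  "Gamma h = (\<Sum>lj\<in>{z. poly h z = 0}.
      cmod (lj ^ degree h / (\<Prod>li\<in>{z. poly h z = 0} - {lj}. (li - lj))))"

end

theory Submission
  imports Defs
begin

(* Write z^(n+d) = h p + r with deg r < n.  Since r agrees with z^(n+d) at the roots, partial
   fractions give z^(n+d)/p - h = r/p = \<Sum>\<^sub>j \<lambda>\<^sub>j^(n+d) / (p'(\<lambda>\<^sub>j) (z - \<lambda>\<^sub>j)).  For |z| = 1 the j-th
   term is at most \<alpha>^d/(1 - \<alpha>) times the j-th term of \<Gamma>(p), and \<alpha>^d \<le> exp(-d(1 - \<alpha>)), so the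
   error is at most \<zeta> once d \<ge> log(\<Gamma>/((1 - \<alpha>)\<zeta>))/(1 - \<alpha>); thus c = 1 works. *)

lemma degree_prod_linear_factors:
  fixes R :: "'a::idom set"
  shows "degree (\<Prod>i\<in>R. [:-i, 1:]) = card R"
  by (cases "finite R") (simp_all add: degree_prod_eq_sum_degree)

lemma lagrange_interpolation:
  fixes R :: "'a::field set" and q :: "'a poly"
  assumes fin: "finite R" and deg: "degree q < card R"
  shows "q = (\<Sum>j\<in>R. smult (poly q j / (\<Prod>i\<in>R-{j}. (j - i))) (\<Prod>i\<in>R-{j}. [:-i, 1:]))"
    (is "q = ?L")
proof (rule poly_eqI_degree)
  fix k assume k: "k \<in> R"
  have "poly ?L k = (\<Sum>j\<in>R. poly q j / (\<Prod>i\<in>R-{j}. (j - i)) * (\<Prod>i\<in>R-{j}. (k - i)))"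
    by (simp add: poly_sum poly_prod)
  also have "\<dots> = poly q k / (\<Prod>i\<in>R-{k}. (k - i)) * (\<Prod>i\<in>R-{k}. (k - i))"
    using fin k by (subst sum.remove[OF fin k]) (auto intro!: sum.neutral prod_zero)
  also have "\<dots> = poly q k"
    using fin by (simp add: prod_zero_iff)
  finally show "poly q k = poly ?L k" ..
next
  have "degree ?L \<le> card R - 1"
    using fin by (intro degree_sum_le order.trans[OF degree_smult_le])
      (simp_all add: degree_prod_linear_factors)
  with deg show "degree ?L < card R" by linarith
qed (fact deg)

lemma partial_fraction_expansion:
  fixes R :: "'a::field set" and q :: "'a poly"
  assumes fin: "finite R" and deg: "degree q < card R" and z: "z \<notin> R"
  shows "poly q z / (\<Prod>i\<in>R. (z - i)) =
         (\<Sum>j\<in>R. poly q j / ((\<Prod>i\<in>R-{j}. (j - i)) * (z - j)))"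
proof -
  have "poly q z / (\<Prod>i\<in>R. (z - i)) =
      (\<Sum>j\<in>R. poly q j / (\<Prod>i\<in>R-{j}. (j - i)) * (\<Prod>i\<in>R-{j}. (z - i)) / (\<Prod>i\<in>R. (z - i)))"
    by (subst lagrange_interpolation[OF fin deg])
      (simp add: poly_sum poly_prod sum_divide_distrib)
  also have "\<dots> = (\<Sum>j\<in>R. poly q j / ((\<Prod>i\<in>R-{j}. (j - i)) * (z - j)))"
  proof (rule sum.cong[OF refl])
    fix j assume j: "j \<in> R"
    have "(\<Prod>i\<in>R. (z - i)) = (z - j) * (\<Prod>i\<in>R-{j}. (z - i))"
      using fin j by (simp add: prod.remove)
    moreover have "(\<Prod>i\<in>R-{j}. (z - i)) \<noteq> 0" "z - j \<noteq> 0"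
      using fin z j by (auto simp: prod_zero_iff)
    ultimately show "poly q j / (\<Prod>i\<in>R-{j}. (j - i)) * (\<Prod>i\<in>R-{j}. (z - i)) / (\<Prod>i\<in>R. (z - i)) =
        poly q j / ((\<Prod>i\<in>R-{j}. (j - i)) * (z - j))"
      by simp
  qed
  finally show ?thesis .
qed

lemma monic_eq_prod_roots:
  fixes p :: "'a::idom poly"
  assumes lc: "lead_coeff p = 1" and card: "card {z. poly p z = 0} = degree p"
  shows "p = (\<Prod>i\<in>{z. poly p z = 0}. [:-i, 1:])" (is "p = ?Q")
proof (rule poly_eqI_degree_lead_coeff)
  have deg: "degree ?Q = degree p"
    using card by (simp add: degree_prod_linear_factors)
  then show "degree ?Q \<le> degree p"
    by simp
  have "lead_coeff ?Q = 1"
    by (simp add: lead_coeff_prod)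
  with lc deg show "coeff p (degree p) = coeff ?Q (degree p)"
    by simp
  have "finite {z. poly p z = 0}"
    using lc by (intro poly_roots_finite) auto
  then show "poly p z = poly ?Q z" if "z \<in> {z. poly p z = 0}" for z
    using that by (auto simp: poly_prod intro: prod_zero)
qed (use card in auto)

lemma degree_lead_coeff_div:
  fixes x p :: "'a::field poly"
  assumes p: "p \<noteq> 0" and deg: "degree p \<le> degree x"
  shows "degree (x div p) = degree x - degree p"
    and "lead_coeff (x div p) = lead_coeff x / lead_coeff p"
proof -
  have div_mult: "x div p * p = x - x mod p"
    by (simp add: minus_mod_eq_div_mult)
  have "degree (x - x mod p) = degree x \<and> lead_coeff (x - x mod p) = lead_coeff x"
  proof (cases "x mod p = 0")
    case False
    then have "degree (x mod p) < degree x"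
      using degree_mod_less'[OF p False] deg by linarith
    moreover have "x - x mod p = - (x mod p) + x"
      by simp
    ultimately show ?thesis
      using lead_coeff_add_le[of "- (x mod p)" x] degree_add_eq_right[of "- (x mod p)" x] by simp
  qed simp
  then have dx: "degree (x div p * p) = degree x" and lx: "lead_coeff (x div p * p) = lead_coeff x"
    unfolding div_mult by blast+
  show "degree (x div p) = degree x - degree p"
    using dx p by (cases "x div p = 0") (simp_all add: degree_mult_eq)
  show "lead_coeff (x div p) = lead_coeff x / lead_coeff p"
    using lx p by (simp add: lead_coeff_mult eq_divide_eq)
qed

(* x mod p agrees with x on R and has degree below card R, so it is the Lagrange interpolant of x on R. *)
lemma poly_div_error_partial_fractions:
  fixes R :: "'a::field set" and x p :: "'a poly"
  assumes fin: "finite R" and p: "p = (\<Prod>i\<in>R. [:-i, 1:])" and z: "z \<notin> R"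
  shows "poly x z / poly p z - poly (x div p) z =
         (\<Sum>j\<in>R. poly x j / ((\<Prod>i\<in>R-{j}. (j - i)) * (z - j)))"
proof -
  have pz: "poly p z = (\<Prod>i\<in>R. (z - i))"
    by (simp add: p poly_prod)
  have decomp: "poly x w = poly (x div p) w * poly p w + poly (x mod p) w" for w
    by (metis div_mult_mod_eq poly_add poly_mult)
  have "poly p z \<noteq> 0"
    using fin z by (simp add: pz prod_zero_iff)
  then have lhs: "poly x z / poly p z - poly (x div p) z = poly (x mod p) z / poly p z"
    by (simp add: decomp field_simps)
  have "poly x j = poly (x mod p) j" if "j \<in> R" for j
    using fin that by (simp add: decomp p poly_prod prod_zero_iff)
  then have rhs: "(\<Sum>j\<in>R. poly x j / ((\<Prod>i\<in>R-{j}. (j - i)) * (z - j))) =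
      (\<Sum>j\<in>R. poly (x mod p) j / ((\<Prod>i\<in>R-{j}. (j - i)) * (z - j)))"
    by simp
  show ?thesis
  proof (cases "x mod p = 0")
    case False
    have "degree (x mod p) < card R"
      using degree_mod_less'[OF _ False] fin by (simp add: p degree_prod_linear_factors prod_zero_iff)
    then show ?thesis
      unfolding lhs rhs unfolding pz by (rule partial_fraction_expansion[OF fin _ z])
  qed (simp add: lhs rhs)
qed

lemma norm_partial_fraction_term_le:
  fixes j z P :: complex and \<alpha> :: real
  assumes j: "cmod j \<le> \<alpha>" and \<alpha>: "\<alpha> < 1" and z: "1 \<le> cmod z"
  shows "cmod (j ^ (n + d) / (P * (z - j))) \<le> \<alpha> ^ d / (1 - \<alpha>) * cmod (j ^ n / P)"
proof (cases "P = 0")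
  case False
  have "0 \<le> \<alpha>"
    using j by (meson norm_ge_zero order_trans)
  have "cmod (j ^ (n + d) / (P * (z - j))) = cmod j ^ n * cmod j ^ d / (cmod P * cmod (z - j))"
    by (simp add: norm_divide norm_mult norm_power power_add)
  also have "\<dots> \<le> cmod j ^ n * \<alpha> ^ d / (cmod P * (1 - \<alpha>))"
  proof (rule frac_le)
    show "cmod j ^ n * cmod j ^ d \<le> cmod j ^ n * \<alpha> ^ d"
      using j by (intro mult_left_mono power_mono) auto
    show "cmod P * (1 - \<alpha>) \<le> cmod P * cmod (z - j)"
      using norm_triangle_ineq2[of z j] j z by (intro mult_left_mono) auto
  qed (use False \<alpha> \<open>0 \<le> \<alpha>\<close> in auto)
  also have "\<dots> = \<alpha> ^ d / (1 - \<alpha>) * cmod (j ^ n / P)"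
    by (simp add: norm_divide norm_power mult_ac)
  finally show ?thesis .
qed simp

lemma norm_monom_div_error_le:
  fixes p :: "complex poly" and \<alpha> :: real
  assumes lc: "lead_coeff p = 1" and card: "card {z. poly p z = 0} = degree p"
    and roots: "\<And>w. poly p w = 0 \<Longrightarrow> cmod w \<le> \<alpha>" and \<alpha>: "\<alpha> < 1" and z: "1 \<le> cmod z"
  shows "cmod (z ^ (degree p + d) / poly p z - poly (monom 1 (degree p + d) div p) z)
           \<le> \<alpha> ^ d / (1 - \<alpha>) * Gamma p"
proof -
  define R where "R = {z. poly p z = 0}"
  define n where "n = degree p"
  have fin: "finite R"
    using lc unfolding R_def by (intro poly_roots_finite) auto
  have zR: "z \<notin> R"
    using roots[of z] \<alpha> z unfolding R_def by force
  have "z ^ (n + d) / poly p z - poly (monom 1 (n + d) div p) z =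
      (\<Sum>j\<in>R. j ^ (n + d) / ((\<Prod>i\<in>R-{j}. (j - i)) * (z - j)))"
    using poly_div_error_partial_fractions[OF fin monic_eq_prod_roots[OF lc card, folded R_def] zR,
        where x = "monom 1 (n + d)"]
    by (simp add: poly_monom)
  then have "cmod (z ^ (n + d) / poly p z - poly (monom 1 (n + d) div p) z)
      \<le> (\<Sum>j\<in>R. cmod (j ^ (n + d) / ((\<Prod>i\<in>R-{j}. (j - i)) * (z - j))))"
    by (simp add: norm_sum)
  also have "\<dots> \<le> (\<Sum>j\<in>R. \<alpha> ^ d / (1 - \<alpha>) * cmod (j ^ n / (\<Prod>i\<in>R-{j}. (j - i))))"
    using roots \<alpha> z by (intro sum_mono norm_partial_fraction_term_le) (auto simp: R_def)
  also have "\<dots> = \<alpha> ^ d / (1 - \<alpha>) * Gamma p"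
    by (simp add: Gamma_def R_def n_def sum_distrib_left norm_divide norm_power
        prod_norm[symmetric] norm_minus_commute)
  finally show ?thesis
    by (simp add: n_def)
qed

lemma power_le_exp_neg:
  fixes \<alpha> :: real
  assumes "0 \<le> \<alpha>"
  shows "\<alpha> ^ d \<le> exp (- real d * (1 - \<alpha>))"
proof -
  have "\<alpha> ^ d \<le> exp (\<alpha> - 1) ^ d"
    using assms exp_ge_add_one_self[of "\<alpha> - 1"] by (intro power_mono) auto
  then show ?thesis
    by (simp add: exp_of_nat_mult[symmetric] algebra_simps)
qed

lemma geometric_error_le:
  fixes \<alpha> \<zeta> G :: real
  assumes \<alpha>: "0 \<le> \<alpha>" "\<alpha> < 1" and \<zeta>: "0 < \<zeta>" and G: "0 < G"
    and d: "ln (G / ((1 - \<alpha>) * \<zeta>)) / (1 - \<alpha>) \<le> real d"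
  shows "\<alpha> ^ d / (1 - \<alpha>) * G \<le> \<zeta>"
proof -
  define K where "K = G / ((1 - \<alpha>) * \<zeta>)"
  have K: "0 < K"
    using \<alpha> \<zeta> G by (simp add: K_def)
  have "\<alpha> ^ d \<le> exp (- real d * (1 - \<alpha>))"
    using \<alpha>(1) by (rule power_le_exp_neg)
  also have "\<dots> \<le> exp (- ln K)"
    using d \<alpha> by (simp add: K_def pos_divide_le_eq)
  also have "\<dots> = (1 - \<alpha>) * \<zeta> / G"
    using K by (simp add: exp_minus K_def)
  finally show ?thesis
    using \<alpha> G by (simp add: field_simps)
qed

theorem lemma5p5:
  "\<exists>c::real. c > 0 \<and>
     (\<forall>(\<alpha>::real) (\<zeta>::real) (p::complex poly).
        0 < \<alpha> \<and> \<alpha> < 1 \<and> \<zeta> > 0 \<and> lead_coeff p = 1 \<and>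
        card {z. poly p z = 0} = degree p \<and>
        (\<forall>z. poly p z = 0 \<longrightarrow> cmod z < \<alpha>) \<longrightarrow>
        (\<exists>(d::nat) (h::complex poly).
           real d \<le> c * (1 + max ((1 / (1 - \<alpha>)) * ln (Gamma p / ((1 - \<alpha>) * \<zeta>))) 0) \<and>
           degree h = d \<and> lead_coeff h = 1 \<and>
           (\<forall>z. cmod z = 1 \<longrightarrow>
              cmod (z ^ (degree p + d) / poly p z - poly h z) \<le> \<zeta>)))"
proof (intro exI[of _ "1::real"] conjI allI impI)
  fix \<alpha> \<zeta> :: real and p :: "complex poly"
  assume "0 < \<alpha> \<and> \<alpha> < 1 \<and> \<zeta> > 0 \<and> lead_coeff p = 1 \<and> card {z. poly p z = 0} = degree p \<and>
    (\<forall>z. poly p z = 0 \<longrightarrow> cmod z < \<alpha>)"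
  then have \<alpha>: "0 < \<alpha>" "\<alpha> < 1" and \<zeta>: "0 < \<zeta>" and lc: "lead_coeff p = 1"
    and card: "card {z. poly p z = 0} = degree p" and roots: "\<And>w. poly p w = 0 \<Longrightarrow> cmod w \<le> \<alpha>"
    by (auto intro: less_imp_le)
  let ?M = "max ((1 / (1 - \<alpha>)) * ln (Gamma p / ((1 - \<alpha>) * \<zeta>))) 0"
  define d where "d = nat \<lceil>?M\<rceil>"
  define h where "h = monom 1 (degree p + d) div p"
  have "real d = of_int \<lceil>?M\<rceil>"
    by (simp add: d_def)
  then have d: "?M \<le> real d" "real d \<le> 1 + ?M"
    using le_of_int_ceiling[of ?M] of_int_ceiling_le_add_one[of ?M] by linarith+
  have "p \<noteq> 0"
    using lc by auto
  then have "degree h = d" "lead_coeff h = 1"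
    using degree_lead_coeff_div[of p "monom 1 (degree p + d)"] lc by (simp_all add: h_def degree_monom_eq)
  moreover have "cmod (z ^ (degree p + d) / poly p z - poly h z) \<le> \<zeta>" if "cmod z = 1" for z
  proof -
    have "Gamma p \<ge> 0"
      by (simp add: Gamma_def sum_nonneg)
    then have "\<alpha> ^ d / (1 - \<alpha>) * Gamma p \<le> \<zeta>"
      using \<alpha> \<zeta> d(1) geometric_error_le[of \<alpha> \<zeta> "Gamma p" d]
      by (cases "Gamma p = 0") auto
    moreover have "cmod (z ^ (degree p + d) / poly p z - poly h z) \<le> \<alpha> ^ d / (1 - \<alpha>) * Gamma p"
      unfolding h_def by (rule norm_monom_div_error_le[OF lc card]) (use roots \<alpha> that in auto)
    ultimately show ?thesis
      by linarith
  qed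
  ultimately show "\<exists>d h. real d \<le> 1 * (1 + ?M) \<and> degree h = d \<and> lead_coeff h = 1 \<and>
      (\<forall>z. cmod z = 1 \<longrightarrow> cmod (z ^ (degree p + d) / poly p z - poly h z) \<le> \<zeta>)"
    using d(2) by auto
qed simp

end
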